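(* For any policy $\pi$, any model $W$, any non-negative cost $c$ and any state $x_0$ such that $V^\pi(x_0;c,W^\star)<\infty$ and $J^\pi_h(x;c,W)<\infty$ for all $x,h$, $$J^\pi(x_0;c,W^\star)-J^\pi(x_0;c,W)\le\sqrt{H\,V^\pi(x_0;c,W^\star)}\;\sqrt{\mathbb E\Big[\sum_{h=0}^{H-1}\min\Big\{\tfrac{1}{\sigma^2}\big\|(W^\star-W)\phi(x_h,u_h)\big\|_2^2,\,1\Big\}\Big]},$$ where the expectation is over trajectories of $\pi$ in the model $W^\star$ started at $x_0$.
   Context: $\mathcal X=\mathbb R^{d_{\mathcal X}}$, $\mathcal U$ an arbitrary set, $\phi:\mathcal X\times\mathcal U\to\mathcal H$ a feature map into a Hilbert space; for a bounded linear $W:\mathcal H\to\mathbb R^{d_{\mathcal X}}$ the model $W$ has dynamics $x_{h+1}=W\phi(x_h,u_h)+\epsilon_h$, $\epsilon_h\sim\mathcal N(0,\sigma^2I)$ i.i.d., $h=0,\dots,H-1$ ($\sigma>0$). $W^\star$ is the true model. A policy is $\pi:\mathcal X\times\{0,\dots,H-1\}\to\mathcal U$, $u_h=\pi(x_h,h)$. Cost-to-go $J^\pi_h(x;c,W)=\mathbb E[\sum_{\ell=h}^{H-1}c(x_\ell,u_\ell)\mid\pi,x_h=x,W]$, $J^\pi=J^\pi_0$, and $V^\pi(x_0;c,W^\star)=\mathbb E[(\sum_{h=0}^{H-1}c(x_h,u_h))^2\mid x_0,\pi,W^\star]$. *)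

theory Defs
  imports "HOL-Analysis.Analysis" "HOL-Probability.Probability"
begin

definition gauss :: "real ^ 'd \<Rightarrow> real \<Rightarrow> (real ^ 'd) measure" where
  "gauss m \<sigma> = density lborel
     (\<lambda>y. ennreal (\<Prod>i\<in>UNIV. normal_density (m $ i) \<sigma> (y $ i)))"

definition stepK ::
  "('h \<Rightarrow> real ^ 'd) \<Rightarrow> (real ^ 'd \<Rightarrow> 'u \<Rightarrow> 'h) \<Rightarrow> (real ^ 'd \<Rightarrow> nat \<Rightarrow> 'u)
   \<Rightarrow> real \<Rightarrow> nat \<Rightarrow> real ^ 'd \<Rightarrow> (real ^ 'd) measure" where
  "stepK W \<phi> \<pi> \<sigma> l x = gauss (W (\<phi> x (\<pi> x l))) \<sigma>"

text \<open>Law of the state path (x_h, ..., x_{h+k}) started at x_h = x at time h,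
  as a measure on the product space over the time indices {h..h+k}.\<close>
primrec pathM ::
  "(nat \<Rightarrow> real ^ 'd \<Rightarrow> (real ^ 'd) measure) \<Rightarrow> nat \<Rightarrow> nat \<Rightarrow> real ^ 'd
   \<Rightarrow> (nat \<Rightarrow> real ^ 'd) measure" where
  "pathM K h 0 x = return (PiM {h..h} (\<lambda>_. borel)) (\<lambda>i\<in>{h..h}. x)"
| "pathM K h (Suc k) x =
     pathM K h k x \<bind> (\<lambda>\<omega>. distr (K (h + k) (\<omega> (h + k))) (PiM {h..h + Suc k} (\<lambda>_. borel))
                              (\<lambda>y. fun_upd \<omega> (h + Suc k) y))"

definition traj ::
  "('h \<Rightarrow> real ^ 'd) \<Rightarrow> (real ^ 'd \<Rightarrow> 'u \<Rightarrow> 'h) \<Rightarrow> (real ^ 'd \<Rightarrow> nat \<Rightarrow> 'u)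
   \<Rightarrow> real \<Rightarrow> nat \<Rightarrow> nat \<Rightarrow> real ^ 'd \<Rightarrow> (nat \<Rightarrow> real ^ 'd) measure" where
  "traj W \<phi> \<pi> \<sigma> H h x = pathM (stepK W \<phi> \<pi> \<sigma>) h (H - h) x"

definition Jh ::
  "('h \<Rightarrow> real ^ 'd) \<Rightarrow> (real ^ 'd \<Rightarrow> 'u \<Rightarrow> 'h) \<Rightarrow> (real ^ 'd \<Rightarrow> nat \<Rightarrow> 'u)
   \<Rightarrow> real \<Rightarrow> nat \<Rightarrow> (real ^ 'd \<Rightarrow> 'u \<Rightarrow> real) \<Rightarrow> nat \<Rightarrow> real ^ 'd \<Rightarrow> ennreal" where
  "Jh W \<phi> \<pi> \<sigma> H c h x =
     (\<integral>\<^sup>+ \<omega>. ennreal (\<Sum>l\<in>{h..<H}. c (\<omega> l) (\<pi> (\<omega> l) l)) \<partial>traj W \<phi> \<pi> \<sigma> H h x)"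

definition Vsec ::
  "('h \<Rightarrow> real ^ 'd) \<Rightarrow> (real ^ 'd \<Rightarrow> 'u \<Rightarrow> 'h) \<Rightarrow> (real ^ 'd \<Rightarrow> nat \<Rightarrow> 'u)
   \<Rightarrow> real \<Rightarrow> nat \<Rightarrow> (real ^ 'd \<Rightarrow> 'u \<Rightarrow> real) \<Rightarrow> real ^ 'd \<Rightarrow> ennreal" where
  "Vsec W \<phi> \<pi> \<sigma> H c x0 =
     (\<integral>\<^sup>+ \<omega>. ennreal ((\<Sum>l<H. c (\<omega> l) (\<pi> (\<omega> l) l))\<^sup>2) \<partial>traj W \<phi> \<pi> \<sigma> H 0 x0)"

end

theory Submission
  imports Defs
begin

text \<open>Change of measure through a maximal coupling. A draw from
  \<open>N(W\<^sup>\<star>\<phi>, \<sigma>\<^sup>2I)\<close> that is rejected with probability \<open>(1 - p\<^sub>W/p\<^sub>W\<^sub>\<star>)\<^sub>+\<close>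
  leaves a sub-probability below \<open>N(W\<phi>, \<sigma>\<^sup>2I)\<close>. Along a trajectory the survival
  weight is at least \<open>1 - G\<close>, where \<open>G\<close> sums the rejection probabilities of the steps, so
  \<open>J(W\<^sup>\<star>) \<le> J(W) + E\<^sup>\<star>[C min(G,1)]\<close> for the total cost \<open>C\<close>. Cauchy-Schwarz bounds the
  last term by \<open>\<surd>V \<surd>E\<^sup>\<star>[G\<^sup>2] \<le> \<surd>V \<surd>(H \<Sum>\<^sub>h E\<^sup>\<star>[g\<^sub>h\<^sup>2])\<close>, and the second moment of a single
  rejection probability is at most four times the squared Hellinger distance
  \<open>2 - 2 exp(-\<parallel>m\<^sub>1 - m\<^sub>2\<parallel>\<^sup>2/8\<sigma>\<^sup>2) \<le> \<parallel>m\<^sub>1 - m\<^sub>2\<parallel>\<^sup>2/4\<sigma>\<^sup>2\<close>, and at most \<open>1\<close>.\<close>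

lemma vec_nth_measurable[measurable (raw)]:
  fixes f :: "'a \<Rightarrow> real^'n"
  assumes "f \<in> borel_measurable M"
  shows "(\<lambda>x. f x $ i) \<in> borel_measurable M"
proof -
  have "(\<lambda>x::real^'n. x $ i) \<in> borel_measurable borel"
    by (intro borel_measurable_continuous_onI continuous_on_component continuous_on_id)
  from measurable_compose[OF assms this] show ?thesis by simp
qed

lemma nn_integral_lborel_prod_vec:
  fixes f :: "'d::finite \<Rightarrow> real \<Rightarrow> real"
  assumes f: "\<And>i. f i \<in> borel_measurable borel" "\<And>i x. 0 \<le> f i x"
  shows "(\<integral>\<^sup>+ y. ennreal (\<Prod>i\<in>UNIV. f i ((y::real^'d) $ i)) \<partial>lborel)
       = (\<Prod>i\<in>UNIV. \<integral>\<^sup>+ x. ennreal (f i x) \<partial>lborel)"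
proof -
  define F where "F = (\<lambda>b::real^'d. \<lambda>x. ennreal (f (SOME i. b = axis i 1) x))"
  have inj: "inj (\<lambda>i::'d. axis i (1::real))"
    by (auto simp: inj_def axis_eq_axis)
  have Basis: "(Basis :: (real^'d) set) = (\<lambda>i. axis i 1) ` UNIV"
    by (auto simp: Basis_vec_def)
  have F_axis: "F (axis i 1) x = ennreal (f i x)" for i x
    unfolding F_def by (auto simp: axis_eq_axis)
  have "(\<integral>\<^sup>+ y. (\<Prod>b\<in>Basis. F b (y \<bullet> b)) \<partial>lborel) = (\<Prod>b\<in>Basis. \<integral>\<^sup>+ x. F b x \<partial>lborel)"
    by (rule nn_integral_lborel_prod) (auto simp: Basis F_axis f)
  moreover have "(\<Prod>b\<in>Basis. F b (y \<bullet> b)) = ennreal (\<Prod>i\<in>UNIV. f i (y $ i))" for y :: "real^'d"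
    unfolding Basis by (subst prod.reindex[OF inj])
      (auto simp: F_axis cart_eq_inner_axis[symmetric] prod_ennreal f)
  moreover have "(\<Prod>b\<in>Basis. \<integral>\<^sup>+ x. F b x \<partial>lborel) = (\<Prod>i\<in>UNIV. \<integral>\<^sup>+ x. ennreal (f i x) \<partial>lborel)"
    unfolding Basis by (subst prod.reindex[OF inj]) (simp add: F_axis[abs_def] F_def axis_eq_axis)
  ultimately show ?thesis by simp
qed

lemma real_sqrt_prod: "sqrt (prod f A) = (\<Prod>i\<in>A. sqrt (f i))"
  by (induct A rule: infinite_finite_induct) (simp_all add: real_sqrt_mult)

lemma real_sqrt_exp: "sqrt (exp x) = exp (x / 2)"
proof -
  have "exp x = exp (x / 2) * exp (x / 2)" by (simp add: exp_add[symmetric])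
  then show ?thesis by (simp add: real_sqrt_mult_self)
qed

lemma ennreal_one_minus_add_le:
  assumes "0 \<le> a" "0 \<le> b" "b \<le> 1"
  shows "ennreal (1 - (a + b)) \<le> ennreal (1 - a) * ennreal (1 - b)"
proof (cases "a \<le> 1")
  case True
  have "1 - (a + b) \<le> (1 - a) * (1 - b)" using assms True by (simp add: algebra_simps)
  then show ?thesis using True assms by (simp add: ennreal_mult'[symmetric] ennreal_leI)
next
  case False
  then have "ennreal (1 - (a + b)) = 0" using assms by (simp add: ennreal_eq_0_iff)
  then show ?thesis by simp
qed

lemma ennreal_one_le_one_minus_plus_min:
  assumes "0 \<le> (t::real)" shows "1 \<le> ennreal (1 - t) + ennreal (min t 1)"
proof (cases "t \<le> 1")
  case True
  then have "ennreal (1 - t) + ennreal (min t 1) = ennreal (1 - t + t)"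
    using assms by (simp add: ennreal_plus[symmetric])
  then show ?thesis by simp
qed simp

lemma enn2real_diff_le_of_sq_bound:
  fixes a b x v s :: ennreal
  assumes le: "a \<le> b + x" and sq: "x\<^sup>2 \<le> v * (of_nat k * s)"
    and fin: "b < \<infinity>" "v < \<infinity>" "s < \<infinity>"
  shows "enn2real a - enn2real b \<le> sqrt (real k * enn2real v) * sqrt (enn2real s)"
proof -
  obtain b' v' s' where b': "b = ennreal b'" "0 \<le> b'" and v': "v = ennreal v'" "0 \<le> v'"
    and s': "s = ennreal s'" "0 \<le> s'"
    using fin by (metis ennreal_cases less_irrefl top.extremum_strict)
  have x_sq: "x\<^sup>2 \<le> ennreal (v' * (real k * s'))"
    using sq v' s' by (simp add: ennreal_mult ennreal_of_nat_eq_real_of_nat)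
  then have "x \<noteq> \<infinity>"
    by (auto simp: power2_eq_square top_unique)
  then obtain x' where x': "x = ennreal x'" "0 \<le> x'"
    by (cases x rule: ennreal_cases) auto
  have "x'\<^sup>2 \<le> v' * (real k * s')"
    using x_sq x' v' s' by (simp add: ennreal_power)
  then have "x' \<le> sqrt (real k * v') * sqrt s'"
    by (simp add: real_le_rsqrt real_sqrt_mult[symmetric] ac_simps)
  moreover have "enn2real a \<le> b' + x'"
    using le b' x' by (intro enn2real_leI) (simp_all add: ennreal_plus)
  ultimately show ?thesis
    using b' v' s' by simp
qed


section \<open>Isotropic Gaussians\<close>

definition gauss_pdf :: "real \<Rightarrow> real ^ 'd \<Rightarrow> real ^ 'd \<Rightarrow> real" where
  "gauss_pdf \<sigma> m y = (\<Prod>i\<in>UNIV. normal_density (m $ i) \<sigma> (y $ i))"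

lemma gauss_pdf_nonneg: "0 \<le> gauss_pdf \<sigma> m y"
  by (simp add: gauss_pdf_def prod_nonneg)

lemma borel_measurable_gauss_pdf[measurable]:
  assumes [measurable]: "f \<in> borel_measurable M" "g \<in> borel_measurable M"
  shows "(\<lambda>x. gauss_pdf \<sigma> (f x) (g x)) \<in> borel_measurable M"
  unfolding gauss_pdf_def normal_density_def by measurable

lemma gauss_eq_density: "gauss m \<sigma> = density lborel (\<lambda>y. ennreal (gauss_pdf \<sigma> m y))"
  by (simp add: gauss_def gauss_pdf_def)

lemma sets_gauss[simp, measurable_cong]: "sets (gauss m \<sigma>) = sets borel"
  by (simp add: gauss_def)

lemma nn_integral_gauss:
  "f \<in> borel_measurable borel \<Longrightarrow>
   (\<integral>\<^sup>+ y. f y \<partial>gauss m \<sigma>) = (\<integral>\<^sup>+ y. ennreal (gauss_pdf \<sigma> m y) * f y \<partial>lborel)"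
  unfolding gauss_eq_density by (subst nn_integral_density) auto

lemma nn_integral_lborel_gauss_pdf:
  assumes "\<sigma> > 0" shows "(\<integral>\<^sup>+ y. ennreal (gauss_pdf \<sigma> (m::real^'d) y) \<partial>lborel) = 1"
proof -
  have "(\<integral>\<^sup>+ x. ennreal (normal_density \<mu> \<sigma> x) \<partial>lborel) = 1" for \<mu>
    using assms by (subst nn_integral_eq_integral) (auto intro: integrable_normal_density)
  then show ?thesis
    unfolding gauss_pdf_def by (subst nn_integral_lborel_prod_vec) auto
qed

lemma prob_space_gauss: "\<sigma> > 0 \<Longrightarrow> prob_space (gauss m \<sigma>)"
  by (rule prob_spaceI) (simp add: gauss_eq_density emeasure_density nn_integral_lborel_gauss_pdf)

lemma measurable_gauss[measurable]:
  assumes "\<sigma> > 0" shows "(\<lambda>m. gauss m \<sigma>) \<in> borel \<rightarrow>\<^sub>M subprob_algebra borel"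
proof (rule measurable_subprob_algebra)
  fix A :: "(real^'d) set" assume [measurable]: "A \<in> sets borel"
  have "(\<lambda>m. \<integral>\<^sup>+ y. ennreal (gauss_pdf \<sigma> m y) * indicator A y \<partial>lborel) \<in> borel_measurable borel"
    by measurable
  then show "(\<lambda>m. emeasure (gauss m \<sigma>) A) \<in> borel_measurable borel"
    by (simp add: gauss_eq_density emeasure_density)
qed (use prob_space_gauss[OF assms] prob_space_imp_subprob_space in auto)

lemma sqrt_normal_density_mult:
  assumes "\<sigma> > 0"
  shows "sqrt (normal_density \<mu>1 \<sigma> y * normal_density \<mu>2 \<sigma> y)
       = exp (-(\<mu>1 - \<mu>2)\<^sup>2 / (8 * \<sigma>\<^sup>2)) * normal_density ((\<mu>1 + \<mu>2) / 2) \<sigma> y"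
proof -
  define c where "c = 1 / sqrt (2 * pi * \<sigma>\<^sup>2)"
  have c_nonneg: "c \<ge> 0" by (simp add: c_def)
  have "normal_density \<mu>1 \<sigma> y * normal_density \<mu>2 \<sigma> y
      = (c * c) * exp (-(y - \<mu>1)\<^sup>2 / (2 * \<sigma>\<^sup>2) + -(y - \<mu>2)\<^sup>2 / (2 * \<sigma>\<^sup>2))"
    by (simp add: normal_density_def c_def exp_add[symmetric] exp_diff)
  then have "sqrt (normal_density \<mu>1 \<sigma> y * normal_density \<mu>2 \<sigma> y)
      = c * exp ((-(y - \<mu>1)\<^sup>2 / (2 * \<sigma>\<^sup>2) + -(y - \<mu>2)\<^sup>2 / (2 * \<sigma>\<^sup>2)) / 2)"
    using c_nonneg by (simp add: real_sqrt_mult real_sqrt_mult_self real_sqrt_exp)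
  also have "(-(y - \<mu>1)\<^sup>2 / (2 * \<sigma>\<^sup>2) + -(y - \<mu>2)\<^sup>2 / (2 * \<sigma>\<^sup>2)) / 2
      = -(\<mu>1 - \<mu>2)\<^sup>2 / (8 * \<sigma>\<^sup>2) + -(y - (\<mu>1 + \<mu>2) / 2)\<^sup>2 / (2 * \<sigma>\<^sup>2)"
    using assms by (simp add: field_simps power2_eq_square)
  finally show ?thesis
    by (simp add: normal_density_def c_def exp_add[symmetric] exp_diff)
qed

lemma sqrt_gauss_pdf_mult:
  assumes "\<sigma> > 0"
  shows "sqrt (gauss_pdf \<sigma> m1 y * gauss_pdf \<sigma> m2 y)
       = exp (-(norm (m1 - m2))\<^sup>2 / (8 * \<sigma>\<^sup>2)) * gauss_pdf \<sigma> ((1/2) *\<^sub>R (m1 + m2)) y"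
proof -
  have "sqrt (gauss_pdf \<sigma> m1 y * gauss_pdf \<sigma> m2 y)
      = (\<Prod>i\<in>UNIV. exp (-(m1 $ i - m2 $ i)\<^sup>2 / (8 * \<sigma>\<^sup>2))
                     * normal_density ((m1 $ i + m2 $ i) / 2) \<sigma> (y $ i))"
    unfolding gauss_pdf_def prod.distrib[symmetric] real_sqrt_prod
    using assms by (simp add: sqrt_normal_density_mult)
  also have "\<dots> = exp (\<Sum>i\<in>UNIV. -(m1 $ i - m2 $ i)\<^sup>2 / (8 * \<sigma>\<^sup>2))
                  * gauss_pdf \<sigma> ((1/2) *\<^sub>R (m1 + m2)) y"
    by (simp add: prod.distrib exp_sum gauss_pdf_def add_divide_distrib)
  also have "(\<Sum>i\<in>UNIV. -(m1 $ i - m2 $ i)\<^sup>2 / (8 * \<sigma>\<^sup>2)) = -(norm (m1 - m2))\<^sup>2 / (8 * \<sigma>\<^sup>2)"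
    by (simp add: norm_vec_def L2_set_def sum_nonneg sum_divide_distrib[symmetric] sum_negf)
  finally show ?thesis .
qed

lemma nn_integral_gauss_hellinger:
  assumes \<sigma>: "\<sigma> > 0"
  shows "(\<integral>\<^sup>+ y. ennreal ((sqrt (gauss_pdf \<sigma> m1 y) - sqrt (gauss_pdf \<sigma> m2 y))\<^sup>2) \<partial>lborel)
       = ennreal (2 - 2 * exp (-(norm (m1 - m2))\<^sup>2 / (8 * \<sigma>\<^sup>2)))"
proof -
  let ?p = "gauss_pdf \<sigma> m1" and ?q = "gauss_pdf \<sigma> m2"
    and ?r = "gauss_pdf \<sigma> ((1/2) *\<^sub>R (m1 + m2))"
  define e where "e = exp (-(norm (m1 - m2))\<^sup>2 / (8 * \<sigma>\<^sup>2))"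
  define h where "h y = (sqrt (?p y) - sqrt (?q y))\<^sup>2" for y
  have [measurable]: "h \<in> borel_measurable borel"
    unfolding h_def[abs_def] by measurable
  have e: "0 \<le> e" "e \<le> 1"
    using \<sigma> by (simp_all add: e_def divide_nonpos_pos)
  have split: "ennreal (?p y + ?q y) = ennreal (h y) + ennreal (2 * e) * ennreal (?r y)" for y
  proof -
    have "sqrt (?p y) * sqrt (?q y) = e * ?r y"
      using sqrt_gauss_pdf_mult[OF \<sigma>, of m1 y m2] by (simp add: e_def real_sqrt_mult)
    then have "?p y + ?q y = h y + 2 * e * ?r y"
      by (simp add: h_def power2_diff gauss_pdf_nonneg)
    then show ?thesis
      using e by (simp add: h_def gauss_pdf_nonneg ennreal_plus ennreal_mult mult.assoc)
  qed
  have "2 = (\<integral>\<^sup>+ y. ennreal (?p y) + ennreal (?q y) \<partial>lborel)"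
    using \<sigma> by (simp add: nn_integral_add nn_integral_lborel_gauss_pdf)
  also have "\<dots> = (\<integral>\<^sup>+ y. ennreal (h y) + ennreal (2 * e) * ennreal (?r y) \<partial>lborel)"
    by (simp add: split[symmetric] gauss_pdf_nonneg ennreal_plus)
  also have "\<dots> = (\<integral>\<^sup>+ y. ennreal (h y) \<partial>lborel) + ennreal (2 * e)"
    using \<sigma> by (simp add: nn_integral_add nn_integral_cmult nn_integral_lborel_gauss_pdf)
  finally have "(\<integral>\<^sup>+ y. ennreal (h y) \<partial>lborel) + ennreal (2 * e) = ennreal (2 - 2 * e) + ennreal (2 * e)"
    using e by (simp add: ennreal_plus[symmetric])
  then show ?thesis
    by (simp add: ennreal_add_left_cancel add.commute h_def e_def)
qed


section \<open>Maximal coupling\<close>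

text \<open>In the maximal coupling of densities \<open>p\<close> and \<open>q\<close>, a sample of \<open>p\<close> is kept with
  probability \<open>min 1 (q/p)\<close>; \<open>reject_prob p q\<close> is the probability of discarding it, so that
  the surviving density is \<open>p (1 - reject_prob p q) = min p q\<close>.\<close>

definition reject_prob :: "real \<Rightarrow> real \<Rightarrow> real" where
  "reject_prob p q = (if q < p then 1 - q / p else 0)"

lemma borel_measurable_reject_prob[measurable]:
  assumes [measurable]: "f \<in> borel_measurable M" "g \<in> borel_measurable M"
  shows "(\<lambda>x. reject_prob (f x) (g x)) \<in> borel_measurable M"
  unfolding reject_prob_def by measurable

lemma reject_prob_nonneg: "0 \<le> q \<Longrightarrow> 0 \<le> reject_prob p q"
  by (simp add: reject_prob_def)

lemma reject_prob_le_1: "0 \<le> q \<Longrightarrow> reject_prob p q \<le> 1"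
  by (simp add: reject_prob_def)

lemma mult_one_minus_reject_prob_le: "0 \<le> q \<Longrightarrow> p * (1 - reject_prob p q) \<le> q"
  by (simp add: reject_prob_def)

lemma mult_reject_prob_sq_le:
  assumes "0 \<le> q"
  shows "p * (reject_prob p q)\<^sup>2 \<le> 4 * (sqrt p - sqrt q)\<^sup>2"
proof (cases "q < p")
  case True
  define a where "a = sqrt p"
  define b where "b = sqrt q"
  have ab: "0 \<le> b" "b < a"
    using assms True by (simp_all add: a_def b_def)
  have p: "p = a\<^sup>2" and q: "q = b\<^sup>2"
    using assms True by (simp_all add: a_def b_def)
  have "p * (reject_prob p q)\<^sup>2 = (a - b)\<^sup>2 * ((a + b)\<^sup>2 / a\<^sup>2)"
    using True ab unfolding reject_prob_def p q
    by (simp add: field_simps power2_eq_square)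
  also have "\<dots> \<le> (a - b)\<^sup>2 * 4"
  proof (intro mult_left_mono)
    have "(a + b)\<^sup>2 \<le> (2 * a)\<^sup>2"
      using ab by (intro power_mono) auto
    then show "(a + b)\<^sup>2 / a\<^sup>2 \<le> 4"
      using ab by (simp add: field_simps)
  qed simp
  finally show ?thesis
    by (simp add: a_def b_def mult.commute)
qed (simp add: reject_prob_def)

lemma nn_integral_gauss_survival_le:
  assumes \<sigma>: "\<sigma> > 0" and f[measurable]: "f \<in> borel_measurable borel"
  shows "(\<integral>\<^sup>+ y. f y * ennreal (1 - reject_prob (gauss_pdf \<sigma> m1 y) (gauss_pdf \<sigma> m2 y)) \<partial>gauss m1 \<sigma>)
       \<le> (\<integral>\<^sup>+ y. f y \<partial>gauss m2 \<sigma>)"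
proof -
  have "ennreal (gauss_pdf \<sigma> m1 y) * ennreal (1 - reject_prob (gauss_pdf \<sigma> m1 y) (gauss_pdf \<sigma> m2 y))
        \<le> ennreal (gauss_pdf \<sigma> m2 y)" for y
    using mult_one_minus_reject_prob_le[OF gauss_pdf_nonneg]
    by (simp add: gauss_pdf_nonneg ennreal_mult'[symmetric] ennreal_leI)
  then have "(\<integral>\<^sup>+ y. ennreal (gauss_pdf \<sigma> m1 y)
                  * (f y * ennreal (1 - reject_prob (gauss_pdf \<sigma> m1 y) (gauss_pdf \<sigma> m2 y))) \<partial>lborel)
      \<le> (\<integral>\<^sup>+ y. ennreal (gauss_pdf \<sigma> m2 y) * f y \<partial>lborel)"
    by (intro nn_integral_mono) (metis mult.assoc mult.commute mult_left_mono zero_le)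
  then show ?thesis
    by (simp add: nn_integral_gauss)
qed

lemma nn_integral_gauss_reject_sq_le:
  assumes \<sigma>: "\<sigma> > 0"
  shows "(\<integral>\<^sup>+ y. ennreal ((reject_prob (gauss_pdf \<sigma> m1 y) (gauss_pdf \<sigma> m2 y))\<^sup>2) \<partial>gauss m1 \<sigma>)
       \<le> ennreal (min ((norm (m1 - m2))\<^sup>2 / \<sigma>\<^sup>2) 1)"
proof -
  let ?r = "\<lambda>y. reject_prob (gauss_pdf \<sigma> m1 y) (gauss_pdf \<sigma> m2 y)"
  let ?d = "(norm (m1 - m2))\<^sup>2 / \<sigma>\<^sup>2"
  have "(\<integral>\<^sup>+ y. ennreal ((?r y)\<^sup>2) \<partial>gauss m1 \<sigma>)
      = (\<integral>\<^sup>+ y. ennreal (gauss_pdf \<sigma> m1 y * (?r y)\<^sup>2) \<partial>lborel)"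
    by (simp add: nn_integral_gauss ennreal_mult'[symmetric] gauss_pdf_nonneg)
  also have "\<dots> \<le> (\<integral>\<^sup>+ y. ennreal (4 * (sqrt (gauss_pdf \<sigma> m1 y) - sqrt (gauss_pdf \<sigma> m2 y))\<^sup>2) \<partial>lborel)"
    by (intro nn_integral_mono ennreal_leI) (simp add: mult_reject_prob_sq_le gauss_pdf_nonneg)
  also have "\<dots> = ennreal 4 * ennreal (2 - 2 * exp (- ?d / 8))"
    using \<sigma> by (simp add: ennreal_mult' nn_integral_cmult nn_integral_gauss_hellinger mult.commute)
  also have "\<dots> = ennreal (4 * (2 - 2 * exp (- ?d / 8)))"
    by (rule ennreal_mult'[symmetric]) simp
  also have "\<dots> \<le> ennreal ?d"
    using exp_ge_add_one_self[of "- ?d / 8"] by (intro ennreal_leI) simp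
  finally have "(\<integral>\<^sup>+ y. ennreal ((?r y)\<^sup>2) \<partial>gauss m1 \<sigma>) \<le> ennreal ?d" .
  moreover have "(\<integral>\<^sup>+ y. ennreal ((?r y)\<^sup>2) \<partial>gauss m1 \<sigma>) \<le> (\<integral>\<^sup>+ y. 1 \<partial>gauss m1 \<sigma>)"
    by (intro nn_integral_mono)
      (simp add: power_le_one reject_prob_nonneg reject_prob_le_1 gauss_pdf_nonneg)
  moreover have "(\<integral>\<^sup>+ y. 1 \<partial>gauss m1 \<sigma>) = 1"
    using prob_space.emeasure_space_1[OF prob_space_gauss[OF \<sigma>]] by simp
  ultimately show ?thesis
    by (simp add: min_def)
qed


section \<open>Path measures\<close>

lemma sets_pathM[simp, measurable_cong]:
  "sets (pathM K h k x) = sets (PiM {h..h+k} (\<lambda>_. borel :: (real^'d) measure))"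
proof (induct k)
  case (Suc k)
  have "space (pathM K h k x) \<noteq> {}"
    using sets_eq_imp_space_eq[OF Suc] by (simp add: space_PiM PiE_eq_empty_iff)
  then show ?case
    by (simp only: pathM.simps) (rule sets_bind, simp)
qed simp

lemma space_pathM[simp]:
  "space (pathM K h k x) = space (PiM {h..h+k} (\<lambda>_. borel :: (real^'d) measure))"
  by (rule sets_eq_imp_space_eq) simp

lemma sets_pathM_0:
  "sets (pathM K 0 k x) = sets (PiM {0..k} (\<lambda>_. borel :: (real^'d) measure))"
  using sets_pathM[of K 0 k x] by simp

lemma borel_measurable_sum_path:
  fixes g :: "nat \<Rightarrow> real^'d \<Rightarrow> real"
  assumes "\<And>l. g l \<in> borel_measurable borel"
  shows "(\<lambda>\<omega>. \<Sum>l<H. g l (\<omega> l)) \<in> borel_measurable (PiM {0..H} (\<lambda>_. borel :: (real^'d) measure))"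
proof (intro borel_measurable_sum)
  fix l assume "l \<in> {..<H}"
  then have "(\<lambda>\<omega>. \<omega> l) \<in> PiM {0..H} (\<lambda>_. borel :: (real^'d) measure) \<rightarrow>\<^sub>M borel"
    by (intro measurable_component_singleton) simp
  from measurable_compose[OF this assms] show "(\<lambda>\<omega>. g l (\<omega> l)) \<in> borel_measurable (PiM {0..H} (\<lambda>_. borel))" .
qed

lemma measurable_add_dim_Suc:
  "(\<lambda>(\<omega>, y). fun_upd \<omega> (h + Suc k) y) \<in> measurable (PiM {h..h+k} (\<lambda>_. M) \<Otimes>\<^sub>M M) (PiM {h..h + Suc k} (\<lambda>_. M))"
proof -
  have "{h..h + Suc k} = insert (h + Suc k) {h..h+k}" by auto
  then show ?thesis
    using measurable_add_dim[of "h + Suc k" "{h..h+k}" "\<lambda>_. M"] by simp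
qed

lemma borel_measurable_fun_upd_slice:
  assumes "f \<in> borel_measurable (PiM {h..h + Suc k} (\<lambda>_. borel :: (real^'d) measure))"
    and "\<omega> \<in> space (PiM {h..h+k} (\<lambda>_. borel :: (real^'d) measure))"
  shows "(\<lambda>y. f (fun_upd \<omega> (h + Suc k) y)) \<in> borel_measurable borel"
  using measurable_Pair2[OF measurable_compose[OF measurable_add_dim_Suc assms(1)] assms(2)] by simp

lemma borel_measurable_nn_integral_step:
  fixes K :: "nat \<Rightarrow> real^'d \<Rightarrow> (real^'d) measure"
  assumes K: "K (h + k) \<in> borel \<rightarrow>\<^sub>M subprob_algebra borel"
    and f: "f \<in> borel_measurable (PiM {h..h + Suc k} (\<lambda>_. borel :: (real^'d) measure))"
  shows "(\<lambda>\<omega>. \<integral>\<^sup>+ y. f (fun_upd \<omega> (h + Suc k) y) \<partial>K (h + k) (\<omega> (h + k)))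
           \<in> borel_measurable (PiM {h..h+k} (\<lambda>_. borel))"
proof (rule nn_integral_measurable_subprob_algebra2[where N = borel])
  show "(\<lambda>(\<omega>, y). f (fun_upd \<omega> (h + Suc k) y)) \<in> borel_measurable (PiM {h..h+k} (\<lambda>_. borel) \<Otimes>\<^sub>M borel)"
    using measurable_compose[OF measurable_add_dim_Suc f] by (simp add: case_prod_beta')
  show "(\<lambda>\<omega>. K (h + k) (\<omega> (h + k))) \<in> PiM {h..h+k} (\<lambda>_. borel) \<rightarrow>\<^sub>M subprob_algebra borel"
    using measurable_compose[OF measurable_component_singleton[of "h + k" "{h..h+k}"] K] by simp
qed

lemma nn_integral_pathM_Suc:
  fixes K :: "nat \<Rightarrow> real^'d \<Rightarrow> (real^'d) measure"
  assumes K: "\<And>l. K l \<in> borel \<rightarrow>\<^sub>M subprob_algebra borel"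
    and f[measurable]: "f \<in> borel_measurable (PiM {h..h+Suc k} (\<lambda>_. borel :: (real^'d) measure))"
  shows "(\<integral>\<^sup>+ \<omega>. f \<omega> \<partial>pathM K h (Suc k) x)
       = (\<integral>\<^sup>+ \<omega>. \<integral>\<^sup>+ y. f (fun_upd \<omega> (h + Suc k) y) \<partial>K (h+k) (\<omega> (h+k)) \<partial>pathM K h k x)"
proof -
  let ?Q = "PiM {h..h+Suc k} (\<lambda>_. borel :: (real^'d) measure)"
  have ext: "(\<lambda>(\<omega>, y). fun_upd \<omega> (h + Suc k) y) \<in> measurable (pathM K h k x \<Otimes>\<^sub>M borel) ?Q"
    by (subst measurable_cong_sets[OF sets_pair_measure_cong[OF sets_pathM refl] refl])
      (rule measurable_add_dim_Suc)
  have step: "(\<lambda>\<omega>. K (h+k) (\<omega> (h+k))) \<in> pathM K h k x \<rightarrow>\<^sub>M subprob_algebra borel"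
    by (subst measurable_cong_sets[OF sets_pathM refl])
      (use measurable_compose[OF measurable_component_singleton[of "h + k" "{h..h+k}"] K] in simp)
  have "(\<integral>\<^sup>+ \<omega>. f \<omega> \<partial>pathM K h (Suc k) x)
     = (\<integral>\<^sup>+ \<omega>. \<integral>\<^sup>+ y. f y \<partial>distr (K (h+k) (\<omega> (h+k))) ?Q (\<lambda>y. fun_upd \<omega> (h + Suc k) y) \<partial>pathM K h k x)"
    by (simp only: pathM.simps) (rule nn_integral_bind[OF f measurable_distr2[OF ext step]])
  also have "\<dots> = (\<integral>\<^sup>+ \<omega>. \<integral>\<^sup>+ y. f (fun_upd \<omega> (h + Suc k) y) \<partial>K (h+k) (\<omega> (h+k)) \<partial>pathM K h k x)"
  proof (rule nn_integral_cong)
    fix \<omega> assume \<omega>: "\<omega> \<in> space (pathM K h k x)"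
    have "(\<lambda>y. fun_upd \<omega> (h + Suc k) y) \<in> borel \<rightarrow>\<^sub>M ?Q"
      using measurable_Pair2[OF measurable_add_dim_Suc, of \<omega>] \<omega> by simp
    then have "(\<lambda>y. fun_upd \<omega> (h + Suc k) y) \<in> K (h+k) (\<omega> (h+k)) \<rightarrow>\<^sub>M ?Q"
      by (subst measurable_cong_sets[OF sets_kernel[OF step \<omega>] refl])
    then show "(\<integral>\<^sup>+ y. f y \<partial>distr (K (h+k) (\<omega> (h+k))) ?Q (\<lambda>y. fun_upd \<omega> (h + Suc k) y))
        = (\<integral>\<^sup>+ y. f (fun_upd \<omega> (h + Suc k) y) \<partial>K (h+k) (\<omega> (h+k)))"
      by (rule nn_integral_distr) (subst measurable_cong_sets[OF sets_distr refl], rule f)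
  qed
  finally show ?thesis .
qed

lemma nn_integral_pathM_extend:
  fixes K :: "nat \<Rightarrow> real^'d \<Rightarrow> (real^'d) measure"
  assumes K: "\<And>l. K l \<in> borel \<rightarrow>\<^sub>M subprob_algebra borel" and prob: "\<And>l z. prob_space (K l z)"
    and F: "\<And>k'. k \<le> k' \<Longrightarrow> F \<in> borel_measurable (PiM {h..h+k'} (\<lambda>_. borel :: (real^'d) measure))"
    and F_local: "\<And>\<omega> n y. h + k < n \<Longrightarrow> F (fun_upd \<omega> n y) = F \<omega>"
    and "k \<le> k'"
  shows "(\<integral>\<^sup>+ \<omega>. F \<omega> \<partial>pathM K h k' x) = (\<integral>\<^sup>+ \<omega>. F \<omega> \<partial>pathM K h k x)"
  using \<open>k \<le> k'\<close>
proof (induct k' rule: dec_induct)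
  case (step k')
  have "(\<integral>\<^sup>+ \<omega>. F \<omega> \<partial>pathM K h (Suc k') x)
      = (\<integral>\<^sup>+ \<omega>. \<integral>\<^sup>+ y. F (fun_upd \<omega> (h + Suc k') y) \<partial>K (h+k') (\<omega> (h+k')) \<partial>pathM K h k' x)"
    using step by (intro nn_integral_pathM_Suc K F) simp
  also have "\<dots> = (\<integral>\<^sup>+ \<omega>. F \<omega> \<partial>pathM K h k' x)"
    using step by (intro nn_integral_cong)
      (simp add: F_local prob_space.emeasure_space_1[OF prob])
  finally show ?case using step by simp
qed simp

lemma prob_space_pathM:
  fixes K :: "nat \<Rightarrow> real^'d \<Rightarrow> (real^'d) measure"
  assumes "\<And>l. K l \<in> borel \<rightarrow>\<^sub>M subprob_algebra borel" "\<And>l z. prob_space (K l z)"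
  shows "prob_space (pathM K h k x)"
proof (rule prob_spaceI)
  have "emeasure (pathM K h k x) (space (pathM K h k x)) = (\<integral>\<^sup>+ \<omega>. 1 \<partial>pathM K h k x)"
    by simp
  also have "\<dots> = (\<integral>\<^sup>+ \<omega>. 1 \<partial>pathM K h 0 x)"
    by (rule nn_integral_pathM_extend[OF assms]) auto
  also have "\<dots> = 1"
    by (simp add: prob_space.emeasure_space_1[OF prob_space_return] space_PiM)
  finally show "emeasure (pathM K h k x) (space (pathM K h k x)) = 1" .
qed


section \<open>Coupling two Gaussian chains\<close>

locale gauss_coupling =
  fixes \<sigma> :: real and \<mu> \<nu> :: "nat \<Rightarrow> real^'d \<Rightarrow> real^'d"
  assumes \<sigma>_pos: "\<sigma> > 0"
    and borel_measurable_\<mu>[measurable]: "\<And>l. \<mu> l \<in> borel_measurable borel"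
    and borel_measurable_\<nu>[measurable]: "\<And>l. \<nu> l \<in> borel_measurable borel"
begin

definition K\<mu> :: "nat \<Rightarrow> real^'d \<Rightarrow> (real^'d) measure" where
  "K\<mu> l z = gauss (\<mu> l z) \<sigma>"

definition K\<nu> :: "nat \<Rightarrow> real^'d \<Rightarrow> (real^'d) measure" where
  "K\<nu> l z = gauss (\<nu> l z) \<sigma>"

abbreviation P\<mu> :: "nat \<Rightarrow> real^'d \<Rightarrow> (nat \<Rightarrow> real^'d) measure" where
  "P\<mu> k x \<equiv> pathM K\<mu> 0 k x"

abbreviation P\<nu> :: "nat \<Rightarrow> real^'d \<Rightarrow> (nat \<Rightarrow> real^'d) measure" where
  "P\<nu> k x \<equiv> pathM K\<nu> 0 k x"

lemma K\<mu>_measurable: "K\<mu> l \<in> borel \<rightarrow>\<^sub>M subprob_algebra borel"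
  unfolding K\<mu>_def[abs_def] using measurable_compose[OF borel_measurable_\<mu> measurable_gauss[OF \<sigma>_pos]] .

lemma K\<nu>_measurable: "K\<nu> l \<in> borel \<rightarrow>\<^sub>M subprob_algebra borel"
  unfolding K\<nu>_def[abs_def] using measurable_compose[OF borel_measurable_\<nu> measurable_gauss[OF \<sigma>_pos]] .

lemma prob_space_K\<mu>: "prob_space (K\<mu> l z)"
  unfolding K\<mu>_def using prob_space_gauss[OF \<sigma>_pos] .

text \<open>Along a path of the \<open>\<mu>\<close>-chain, the transition at step \<open>j\<close> is rejected with the
  probability of the maximal coupling with the \<open>\<nu>\<close>-transition; by the union bound,
  \<open>total_rejection k\<close> dominates the probability that some transition before \<open>k\<close> is rejected.\<close>

definition rejection :: "nat \<Rightarrow> (nat \<Rightarrow> real^'d) \<Rightarrow> real" where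
  "rejection j \<omega> = reject_prob (gauss_pdf \<sigma> (\<mu> j (\<omega> j)) (\<omega> (Suc j))) (gauss_pdf \<sigma> (\<nu> j (\<omega> j)) (\<omega> (Suc j)))"

definition total_rejection :: "nat \<Rightarrow> (nat \<Rightarrow> real^'d) \<Rightarrow> real" where
  "total_rejection k \<omega> = (\<Sum>j<k. rejection j \<omega>)"

definition capped_gap :: "nat \<Rightarrow> (nat \<Rightarrow> real^'d) \<Rightarrow> real" where
  "capped_gap j \<omega> = min ((norm (\<mu> j (\<omega> j) - \<nu> j (\<omega> j)))\<^sup>2 / \<sigma>\<^sup>2) 1"

lemma total_rejection_nonneg: "0 \<le> total_rejection k \<omega>"
  by (simp add: total_rejection_def rejection_def sum_nonneg reject_prob_nonneg gauss_pdf_nonneg)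

lemma capped_gap_nonneg: "0 \<le> capped_gap j \<omega>"
  by (simp add: capped_gap_def)

lemma total_rejection_Suc_fun_upd:
  "total_rejection (Suc k) (fun_upd \<omega> (Suc k) y)
     = total_rejection k \<omega> + reject_prob (gauss_pdf \<sigma> (\<mu> k (\<omega> k)) y) (gauss_pdf \<sigma> (\<nu> k (\<omega> k)) y)"
proof -
  have "(\<Sum>j<k. rejection j (fun_upd \<omega> (Suc k) y)) = (\<Sum>j<k. rejection j \<omega>)"
    by (intro sum.cong) (auto simp: rejection_def)
  then show ?thesis
    by (simp add: total_rejection_def rejection_def)
qed

lemma borel_measurable_rejection:
  assumes "Suc j \<le> k"
  shows "rejection j \<in> borel_measurable (PiM {0..k} (\<lambda>_. borel :: (real^'d) measure))"
proof -
  have [measurable]: "(\<lambda>\<omega>. \<omega> j) \<in> PiM {0..k} (\<lambda>_. borel :: (real^'d) measure) \<rightarrow>\<^sub>M borel"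
    and [measurable]: "(\<lambda>\<omega>. \<omega> (Suc j)) \<in> PiM {0..k} (\<lambda>_. borel :: (real^'d) measure) \<rightarrow>\<^sub>M borel"
    using assms by (auto intro: measurable_component_singleton)
  show ?thesis
    unfolding rejection_def[abs_def] by measurable
qed

lemma borel_measurable_total_rejection:
  "k \<le> k' \<Longrightarrow> total_rejection k \<in> borel_measurable (PiM {0..k'} (\<lambda>_. borel :: (real^'d) measure))"
  unfolding total_rejection_def[abs_def] by (intro borel_measurable_sum borel_measurable_rejection) auto

lemma borel_measurable_capped_gap:
  assumes "j \<le> k"
  shows "capped_gap j \<in> borel_measurable (PiM {0..k} (\<lambda>_. borel :: (real^'d) measure))"
proof -
  have [measurable]: "(\<lambda>\<omega>. \<omega> j) \<in> PiM {0..k} (\<lambda>_. borel :: (real^'d) measure) \<rightarrow>\<^sub>M borel"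
    using assms by (intro measurable_component_singleton) simp
  show ?thesis
    unfolding capped_gap_def[abs_def] by measurable
qed

lemma nn_integral_step_survival_le:
  assumes f: "f \<in> borel_measurable (PiM {0..Suc k} (\<lambda>_. borel :: (real^'d) measure))"
    and \<omega>: "\<omega> \<in> space (PiM {0..k} (\<lambda>_. borel :: (real^'d) measure))"
  shows "(\<integral>\<^sup>+ y. f (fun_upd \<omega> (Suc k) y) * ennreal (1 - total_rejection (Suc k) (fun_upd \<omega> (Suc k) y)) \<partial>K\<mu> k (\<omega> k))
       \<le> ennreal (1 - total_rejection k \<omega>) * (\<integral>\<^sup>+ y. f (fun_upd \<omega> (Suc k) y) \<partial>K\<nu> k (\<omega> k))"
proof -
  let ?r = "\<lambda>y. reject_prob (gauss_pdf \<sigma> (\<mu> k (\<omega> k)) y) (gauss_pdf \<sigma> (\<nu> k (\<omega> k)) y)"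
  let ?s = "ennreal (1 - total_rejection k \<omega>)"
  have [measurable]: "(\<lambda>y. f (fun_upd \<omega> (Suc k) y)) \<in> borel_measurable borel"
    using borel_measurable_fun_upd_slice[of f 0 k \<omega>] f \<omega> by simp
  have "(\<integral>\<^sup>+ y. f (fun_upd \<omega> (Suc k) y) * ennreal (1 - total_rejection (Suc k) (fun_upd \<omega> (Suc k) y)) \<partial>K\<mu> k (\<omega> k))
      \<le> (\<integral>\<^sup>+ y. ?s * (f (fun_upd \<omega> (Suc k) y) * ennreal (1 - ?r y)) \<partial>K\<mu> k (\<omega> k))"
  proof (intro nn_integral_mono)
    fix y
    have "ennreal (1 - total_rejection (Suc k) (fun_upd \<omega> (Suc k) y)) \<le> ?s * ennreal (1 - ?r y)"
      unfolding total_rejection_Suc_fun_upd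
      by (intro ennreal_one_minus_add_le total_rejection_nonneg reject_prob_nonneg
                reject_prob_le_1 gauss_pdf_nonneg)
    from mult_left_mono[OF this, of "f (fun_upd \<omega> (Suc k) y)"]
    show "f (fun_upd \<omega> (Suc k) y) * ennreal (1 - total_rejection (Suc k) (fun_upd \<omega> (Suc k) y))
        \<le> ?s * (f (fun_upd \<omega> (Suc k) y) * ennreal (1 - ?r y))"
      by (simp add: ac_simps)
  qed
  also have "\<dots> = ?s * (\<integral>\<^sup>+ y. f (fun_upd \<omega> (Suc k) y) * ennreal (1 - ?r y) \<partial>K\<mu> k (\<omega> k))"
    unfolding K\<mu>_def by (rule nn_integral_cmult) measurable
  also have "\<dots> \<le> ?s * (\<integral>\<^sup>+ y. f (fun_upd \<omega> (Suc k) y) \<partial>K\<nu> k (\<omega> k))"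
    unfolding K\<mu>_def K\<nu>_def
    by (intro mult_left_mono nn_integral_gauss_survival_le \<sigma>_pos) simp_all
  finally show ?thesis .
qed

lemma nn_integral_survival_le:
  "f \<in> borel_measurable (PiM {0..k} (\<lambda>_. borel :: (real^'d) measure)) \<Longrightarrow>
   (\<integral>\<^sup>+ \<omega>. f \<omega> * ennreal (1 - total_rejection k \<omega>) \<partial>P\<mu> k x) \<le> (\<integral>\<^sup>+ \<omega>. f \<omega> \<partial>P\<nu> k x)"
proof (induct k arbitrary: f)
  case 0
  then show ?case by (simp add: total_rejection_def)
next
  case (Suc k)
  note f[measurable] = Suc.prems
  define F where "F \<omega> = (\<integral>\<^sup>+ y. f (fun_upd \<omega> (Suc k) y) \<partial>K\<nu> k (\<omega> k))" for \<omega>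
  have F_measurable: "F \<in> borel_measurable (PiM {0..k} (\<lambda>_. borel))"
    unfolding F_def using borel_measurable_nn_integral_step[of K\<nu> 0 k f] K\<nu>_measurable f by simp
  have [measurable]: "total_rejection (Suc k) \<in> borel_measurable (PiM {0..Suc k} (\<lambda>_. borel :: (real^'d) measure))"
    by (rule borel_measurable_total_rejection) simp
  have "(\<lambda>\<omega>. f \<omega> * ennreal (1 - total_rejection (Suc k) \<omega>))
          \<in> borel_measurable (PiM {0..0 + Suc k} (\<lambda>_. borel :: (real^'d) measure))"
    by simp
  from nn_integral_pathM_Suc[OF K\<mu>_measurable this]
  have "(\<integral>\<^sup>+ \<omega>. f \<omega> * ennreal (1 - total_rejection (Suc k) \<omega>) \<partial>P\<mu> (Suc k) x)
      = (\<integral>\<^sup>+ \<omega>. \<integral>\<^sup>+ y. f (fun_upd \<omega> (Suc k) y) * ennreal (1 - total_rejection (Suc k) (fun_upd \<omega> (Suc k) y))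
              \<partial>K\<mu> k (\<omega> k) \<partial>P\<mu> k x)"
    by simp
  also have "\<dots> \<le> (\<integral>\<^sup>+ \<omega>. F \<omega> * ennreal (1 - total_rejection k \<omega>) \<partial>P\<mu> k x)"
  proof (intro nn_integral_mono)
    fix \<omega> assume "\<omega> \<in> space (P\<mu> k x)"
    then have "\<omega> \<in> space (PiM {0..k} (\<lambda>_. borel :: (real^'d) measure))"
      by simp
    then show "(\<integral>\<^sup>+ y. f (fun_upd \<omega> (Suc k) y) * ennreal (1 - total_rejection (Suc k) (fun_upd \<omega> (Suc k) y)) \<partial>K\<mu> k (\<omega> k))
        \<le> F \<omega> * ennreal (1 - total_rejection k \<omega>)"
      unfolding F_def by (subst mult.commute) (rule nn_integral_step_survival_le[OF f])
  qed
  also have "\<dots> \<le> (\<integral>\<^sup>+ \<omega>. F \<omega> \<partial>P\<nu> k x)"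
    by (rule Suc.hyps[OF F_measurable])
  also have "\<dots> = (\<integral>\<^sup>+ \<omega>. f \<omega> \<partial>P\<nu> (Suc k) x)"
    using nn_integral_pathM_Suc[where K=K\<nu> and h=0 and x=x, OF K\<nu>_measurable] f
    by (simp add: F_def del: pathM.simps)
  finally show ?case .
qed

lemma nn_integral_rejection_sq_le:
  assumes "j < k"
  shows "(\<integral>\<^sup>+ \<omega>. ennreal ((rejection j \<omega>)\<^sup>2) \<partial>P\<mu> k x) \<le> (\<integral>\<^sup>+ \<omega>. ennreal (capped_gap j \<omega>) \<partial>P\<mu> k x)"
proof -
  have "(\<integral>\<^sup>+ \<omega>. ennreal ((rejection j \<omega>)\<^sup>2) \<partial>P\<mu> k x) = (\<integral>\<^sup>+ \<omega>. ennreal ((rejection j \<omega>)\<^sup>2) \<partial>P\<mu> (Suc j) x)"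
  proof (rule nn_integral_pathM_extend[of K\<mu>, OF K\<mu>_measurable prob_space_K\<mu>])
    fix k' assume "Suc j \<le> k'"
    then have [measurable]: "rejection j \<in> borel_measurable (PiM {0..k'} (\<lambda>_. borel :: (real^'d) measure))"
      by (rule borel_measurable_rejection)
    show "(\<lambda>\<omega>. ennreal ((rejection j \<omega>)\<^sup>2)) \<in> borel_measurable (PiM {0..0 + k'} (\<lambda>_. borel :: (real^'d) measure))"
      by simp
  qed (use assms in \<open>simp_all add: rejection_def\<close>)
  also have "\<dots> = (\<integral>\<^sup>+ \<omega>. \<integral>\<^sup>+ y. ennreal ((reject_prob (gauss_pdf \<sigma> (\<mu> j (\<omega> j)) y) (gauss_pdf \<sigma> (\<nu> j (\<omega> j)) y))\<^sup>2)
                             \<partial>K\<mu> j (\<omega> j) \<partial>P\<mu> j x)"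
  proof -
    have "(\<lambda>\<omega>. ennreal ((rejection j \<omega>)\<^sup>2)) \<in> borel_measurable (PiM {0..0 + Suc j} (\<lambda>_. borel :: (real^'d) measure))"
      using borel_measurable_rejection[of j "Suc j"] by simp
    from nn_integral_pathM_Suc[OF K\<mu>_measurable this] show ?thesis
      by (simp add: rejection_def del: pathM.simps)
  qed
  also have "\<dots> \<le> (\<integral>\<^sup>+ \<omega>. ennreal (capped_gap j \<omega>) \<partial>P\<mu> j x)"
    by (intro nn_integral_mono) (simp add: K\<mu>_def capped_gap_def nn_integral_gauss_reject_sq_le[OF \<sigma>_pos])
  also have "\<dots> = (\<integral>\<^sup>+ \<omega>. ennreal (capped_gap j \<omega>) \<partial>P\<mu> k x)"
  proof (rule nn_integral_pathM_extend[of K\<mu>, OF K\<mu>_measurable prob_space_K\<mu>, symmetric])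
    fix k' assume "j \<le> k'"
    then have [measurable]: "capped_gap j \<in> borel_measurable (PiM {0..k'} (\<lambda>_. borel :: (real^'d) measure))"
      by (rule borel_measurable_capped_gap)
    show "(\<lambda>\<omega>. ennreal (capped_gap j \<omega>)) \<in> borel_measurable (PiM {0..0 + k'} (\<lambda>_. borel :: (real^'d) measure))"
      by simp
  qed (use assms in \<open>simp_all add: capped_gap_def\<close>)
  finally show ?thesis .
qed

lemma nn_integral_total_rejection_sq_le:
  "(\<integral>\<^sup>+ \<omega>. ennreal ((total_rejection k \<omega>)\<^sup>2) \<partial>P\<mu> k x)
     \<le> of_nat k * (\<integral>\<^sup>+ \<omega>. ennreal (\<Sum>j<k. capped_gap j \<omega>) \<partial>P\<mu> k x)"
proof -
  have rejection_sq_measurable: "(\<lambda>\<omega>. ennreal ((rejection j \<omega>)\<^sup>2)) \<in> borel_measurable (P\<mu> k x)"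
    if "j \<in> {..<k}" for j
  proof -
    have [measurable]: "rejection j \<in> borel_measurable (PiM {0..k} (\<lambda>_. borel :: (real^'d) measure))"
      using that by (intro borel_measurable_rejection) simp
    show ?thesis unfolding measurable_cong_sets[OF sets_pathM_0 refl] by measurable
  qed
  have capped_gap_measurable: "(\<lambda>\<omega>. ennreal (capped_gap j \<omega>)) \<in> borel_measurable (P\<mu> k x)"
    if "j \<in> {..<k}" for j
  proof -
    have [measurable]: "capped_gap j \<in> borel_measurable (PiM {0..k} (\<lambda>_. borel :: (real^'d) measure))"
      using that by (intro borel_measurable_capped_gap) simp
    show ?thesis unfolding measurable_cong_sets[OF sets_pathM_0 refl] by measurable
  qed
  have "(\<integral>\<^sup>+ \<omega>. ennreal ((total_rejection k \<omega>)\<^sup>2) \<partial>P\<mu> k x)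
      \<le> (\<integral>\<^sup>+ \<omega>. of_nat k * (\<Sum>j<k. ennreal ((rejection j \<omega>)\<^sup>2)) \<partial>P\<mu> k x)"
  proof (rule nn_integral_mono)
    fix \<omega>
    have "(total_rejection k \<omega>)\<^sup>2 \<le> real k * (\<Sum>j<k. (rejection j \<omega>)\<^sup>2)"
      using sum_squared_le_sum_of_squares[of "\<lambda>j. rejection j \<omega>" "{..<k}"]
      by (simp add: total_rejection_def mult.commute)
    then have "ennreal ((total_rejection k \<omega>)\<^sup>2) \<le> ennreal (real k * (\<Sum>j<k. (rejection j \<omega>)\<^sup>2))"
      by (rule ennreal_leI)
    also have "\<dots> = of_nat k * (\<Sum>j<k. ennreal ((rejection j \<omega>)\<^sup>2))"
      by (simp add: ennreal_mult sum_nonneg ennreal_of_nat_eq_real_of_nat)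
    finally show "ennreal ((total_rejection k \<omega>)\<^sup>2) \<le> of_nat k * (\<Sum>j<k. ennreal ((rejection j \<omega>)\<^sup>2))" .
  qed
  also have "\<dots> = of_nat k * (\<integral>\<^sup>+ \<omega>. (\<Sum>j<k. ennreal ((rejection j \<omega>)\<^sup>2)) \<partial>P\<mu> k x)"
    by (intro nn_integral_cmult borel_measurable_sum rejection_sq_measurable)
  also have "\<dots> = of_nat k * (\<Sum>j<k. \<integral>\<^sup>+ \<omega>. ennreal ((rejection j \<omega>)\<^sup>2) \<partial>P\<mu> k x)"
    by (rule arg_cong[where f = "(*) (of_nat k)"], rule nn_integral_sum, rule rejection_sq_measurable)
  also have "\<dots> \<le> of_nat k * (\<Sum>j<k. \<integral>\<^sup>+ \<omega>. ennreal (capped_gap j \<omega>) \<partial>P\<mu> k x)"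
    by (intro mult_left_mono sum_mono nn_integral_rejection_sq_le) auto
  also have "\<dots> = of_nat k * (\<integral>\<^sup>+ \<omega>. (\<Sum>j<k. ennreal (capped_gap j \<omega>)) \<partial>P\<mu> k x)"
    by (rule arg_cong[where f = "(*) (of_nat k)"], rule nn_integral_sum[symmetric], rule capped_gap_measurable)
  also have "\<dots> = of_nat k * (\<integral>\<^sup>+ \<omega>. ennreal (\<Sum>j<k. capped_gap j \<omega>) \<partial>P\<mu> k x)"
    by (simp add: capped_gap_nonneg)
  finally show ?thesis .
qed

lemma nn_integral_le_survival_plus_defect:
  assumes [measurable]: "C \<in> borel_measurable (PiM {0..k} (\<lambda>_. borel :: (real^'d) measure))"
  shows "(\<integral>\<^sup>+ \<omega>. ennreal (C \<omega>) \<partial>P\<mu> k x)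
       \<le> (\<integral>\<^sup>+ \<omega>. ennreal (C \<omega>) \<partial>P\<nu> k x)
         + (\<integral>\<^sup>+ \<omega>. ennreal (C \<omega>) * ennreal (min (total_rejection k \<omega>) 1) \<partial>P\<mu> k x)"
proof -
  have [measurable]: "total_rejection k \<in> borel_measurable (PiM {0..k} (\<lambda>_. borel :: (real^'d) measure))"
    by (rule borel_measurable_total_rejection) simp
  have "(\<integral>\<^sup>+ \<omega>. ennreal (C \<omega>) \<partial>P\<mu> k x)
      \<le> (\<integral>\<^sup>+ \<omega>. ennreal (C \<omega>) * ennreal (1 - total_rejection k \<omega>)
              + ennreal (C \<omega>) * ennreal (min (total_rejection k \<omega>) 1) \<partial>P\<mu> k x)"
  proof (rule nn_integral_mono)
    fix \<omega>
    from mult_left_mono[OF ennreal_one_le_one_minus_plus_min[OF total_rejection_nonneg], of "ennreal (C \<omega>)" k \<omega>]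
    show "ennreal (C \<omega>) \<le> ennreal (C \<omega>) * ennreal (1 - total_rejection k \<omega>)
                           + ennreal (C \<omega>) * ennreal (min (total_rejection k \<omega>) 1)"
      by (simp add: distrib_left)
  qed
  also have "\<dots> = (\<integral>\<^sup>+ \<omega>. ennreal (C \<omega>) * ennreal (1 - total_rejection k \<omega>) \<partial>P\<mu> k x)
                 + (\<integral>\<^sup>+ \<omega>. ennreal (C \<omega>) * ennreal (min (total_rejection k \<omega>) 1) \<partial>P\<mu> k x)"
    by (rule nn_integral_add) (unfold measurable_cong_sets[OF sets_pathM_0 refl], measurable)+
  also have "(\<integral>\<^sup>+ \<omega>. ennreal (C \<omega>) * ennreal (1 - total_rejection k \<omega>) \<partial>P\<mu> k x)
      \<le> (\<integral>\<^sup>+ \<omega>. ennreal (C \<omega>) \<partial>P\<nu> k x)"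
    by (rule nn_integral_survival_le) measurable
  finally show ?thesis
    by (simp add: add_right_mono)
qed

lemma nn_integral_survival_defect_sq_le:
  assumes [measurable]: "C \<in> borel_measurable (PiM {0..k} (\<lambda>_. borel :: (real^'d) measure))"
    and C_nonneg: "\<And>\<omega>. 0 \<le> C \<omega>"
  shows "(\<integral>\<^sup>+ \<omega>. ennreal (C \<omega>) * ennreal (min (total_rejection k \<omega>) 1) \<partial>P\<mu> k x)\<^sup>2
       \<le> (\<integral>\<^sup>+ \<omega>. ennreal ((C \<omega>)\<^sup>2) \<partial>P\<mu> k x)
         * (of_nat k * (\<integral>\<^sup>+ \<omega>. ennreal (\<Sum>j<k. capped_gap j \<omega>) \<partial>P\<mu> k x))"
proof -
  have [measurable]: "total_rejection k \<in> borel_measurable (PiM {0..k} (\<lambda>_. borel :: (real^'d) measure))"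
    by (rule borel_measurable_total_rejection) simp
  have "(\<integral>\<^sup>+ \<omega>. ennreal (C \<omega>) * ennreal (min (total_rejection k \<omega>) 1) \<partial>P\<mu> k x)\<^sup>2
      \<le> (\<integral>\<^sup>+ \<omega>. ennreal (C \<omega>) ^ 2 \<partial>P\<mu> k x)
        * (\<integral>\<^sup>+ \<omega>. ennreal (min (total_rejection k \<omega>) 1) ^ 2 \<partial>P\<mu> k x)"
    by (rule Cauchy_Schwarz_nn_integral) (unfold measurable_cong_sets[OF sets_pathM_0 refl], measurable)+
  also have "(\<integral>\<^sup>+ \<omega>. ennreal (C \<omega>) ^ 2 \<partial>P\<mu> k x) = (\<integral>\<^sup>+ \<omega>. ennreal ((C \<omega>)\<^sup>2) \<partial>P\<mu> k x)"
    by (simp add: ennreal_power C_nonneg)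
  also have "(\<integral>\<^sup>+ \<omega>. ennreal (min (total_rejection k \<omega>) 1) ^ 2 \<partial>P\<mu> k x)
      \<le> (\<integral>\<^sup>+ \<omega>. ennreal ((total_rejection k \<omega>)\<^sup>2) \<partial>P\<mu> k x)"
    by (intro nn_integral_mono)
      (simp add: ennreal_power total_rejection_nonneg ennreal_leI power_mono)
  also have "\<dots> \<le> of_nat k * (\<integral>\<^sup>+ \<omega>. ennreal (\<Sum>j<k. capped_gap j \<omega>) \<partial>P\<mu> k x)"
    by (rule nn_integral_total_rejection_sq_le)
  finally show ?thesis
    by (simp add: mult_left_mono)
qed

lemma nn_integral_capped_gap_le: "(\<integral>\<^sup>+ \<omega>. ennreal (\<Sum>j<k. capped_gap j \<omega>) \<partial>P\<mu> k x) \<le> of_nat k"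
proof -
  have "(\<integral>\<^sup>+ \<omega>. ennreal (\<Sum>j<k. capped_gap j \<omega>) \<partial>P\<mu> k x) \<le> (\<integral>\<^sup>+ \<omega>. of_nat k \<partial>P\<mu> k x)"
  proof (rule nn_integral_mono)
    fix \<omega>
    have "(\<Sum>j<k. capped_gap j \<omega>) \<le> (\<Sum>j<k. 1)"
      by (intro sum_mono) (simp add: capped_gap_def)
    then show "ennreal (\<Sum>j<k. capped_gap j \<omega>) \<le> of_nat k"
      by (simp add: ennreal_of_nat_eq_real_of_nat ennreal_leI)
  qed
  also have "\<dots> = of_nat k"
  proof -
    have "prob_space (P\<mu> k x)"
      by (rule prob_space_pathM) (rule K\<mu>_measurable, rule prob_space_K\<mu>)
    then show ?thesis
      using prob_space.emeasure_space_1 by force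
  qed
  finally show ?thesis .
qed

theorem cost_difference_le:
  assumes C_measurable: "C \<in> borel_measurable (PiM {0..k} (\<lambda>_. borel :: (real^'d) measure))"
    and C_nonneg: "\<And>\<omega>. 0 \<le> C \<omega>"
    and "(\<integral>\<^sup>+ \<omega>. ennreal (C \<omega>) \<partial>P\<nu> k x) < \<infinity>" and "(\<integral>\<^sup>+ \<omega>. ennreal ((C \<omega>)\<^sup>2) \<partial>P\<mu> k x) < \<infinity>"
  shows "enn2real (\<integral>\<^sup>+ \<omega>. ennreal (C \<omega>) \<partial>P\<mu> k x) - enn2real (\<integral>\<^sup>+ \<omega>. ennreal (C \<omega>) \<partial>P\<nu> k x)
     \<le> sqrt (real k * enn2real (\<integral>\<^sup>+ \<omega>. ennreal ((C \<omega>)\<^sup>2) \<partial>P\<mu> k x))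
       * sqrt (enn2real (\<integral>\<^sup>+ \<omega>. ennreal (\<Sum>j<k. capped_gap j \<omega>) \<partial>P\<mu> k x))"
proof (rule enn2real_diff_le_of_sq_bound[OF nn_integral_le_survival_plus_defect[OF C_measurable]
                                             nn_integral_survival_defect_sq_le[OF C_measurable C_nonneg]
                                             assms(3,4)])
  show "(\<integral>\<^sup>+ \<omega>. ennreal (\<Sum>j<k. capped_gap j \<omega>) \<partial>P\<mu> k x) < \<infinity>"
    by (rule le_less_trans[OF nn_integral_capped_gap_le]) (simp add: of_nat_less_top)
qed

end


theorem mainTheorem5:
  fixes \<phi> :: "real ^ 'd \<Rightarrow> 'u \<Rightarrow> 'h::{real_inner, complete_space}"
    and Wstar W :: "'h \<Rightarrow> real ^ 'd"
    and \<pi> :: "real ^ 'd \<Rightarrow> nat \<Rightarrow> 'u"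
    and c :: "real ^ 'd \<Rightarrow> 'u \<Rightarrow> real"
    and \<sigma> :: real and H :: nat and x0 :: "real ^ 'd"
  assumes "\<sigma> > 0"
    and "bounded_linear Wstar" and "bounded_linear W"
    and "\<And>x u. c x u \<ge> 0"
    and "\<And>h. (\<lambda>x. Wstar (\<phi> x (\<pi> x h))) \<in> borel_measurable borel"
    and "\<And>h. (\<lambda>x. W (\<phi> x (\<pi> x h))) \<in> borel_measurable borel"
    and "\<And>h. (\<lambda>x. c x (\<pi> x h)) \<in> borel_measurable borel"
    and "Vsec Wstar \<phi> \<pi> \<sigma> H c x0 < \<infinity>"
    and "\<And>x h. Jh W \<phi> \<pi> \<sigma> H c h x < \<infinity>"
  shows "enn2real (Jh Wstar \<phi> \<pi> \<sigma> H c 0 x0) - enn2real (Jh W \<phi> \<pi> \<sigma> H c 0 x0)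
         \<le> sqrt (real H * enn2real (Vsec Wstar \<phi> \<pi> \<sigma> H c x0))
           * sqrt (enn2real (\<integral>\<^sup>+ \<omega>. ennreal (\<Sum>l<H.
                 min ((norm ((Wstar - W) (\<phi> (\<omega> l) (\<pi> (\<omega> l) l))))\<^sup>2 / \<sigma>\<^sup>2) 1)
               \<partial>traj Wstar \<phi> \<pi> \<sigma> H 0 x0))"
proof -
  interpret gauss_coupling \<sigma> "\<lambda>l z. Wstar (\<phi> z (\<pi> z l))" "\<lambda>l z. W (\<phi> z (\<pi> z l))"
    using assms by unfold_locales auto
  have stepK: "stepK Wstar \<phi> \<pi> \<sigma> = K\<mu>" "stepK W \<phi> \<pi> \<sigma> = K\<nu>"
    by (simp_all add: fun_eq_iff stepK_def K\<mu>_def K\<nu>_def)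
  define C where "C \<omega> = (\<Sum>l<H. c (\<omega> l) (\<pi> (\<omega> l) l))" for \<omega> :: "nat \<Rightarrow> real^'d"
  have C_measurable: "C \<in> borel_measurable (PiM {0..H} (\<lambda>_. borel :: (real^'d) measure))"
    unfolding C_def[abs_def] using borel_measurable_sum_path[of "\<lambda>l x. c x (\<pi> x l)"] assms(7) by simp
  have C_nonneg: "0 \<le> C \<omega>" for \<omega>
    using assms(4) by (simp add: C_def sum_nonneg)
  have J\<mu>: "Jh Wstar \<phi> \<pi> \<sigma> H c 0 x0 = (\<integral>\<^sup>+ \<omega>. ennreal (C \<omega>) \<partial>P\<mu> H x0)"
    and J\<nu>: "Jh W \<phi> \<pi> \<sigma> H c 0 x0 = (\<integral>\<^sup>+ \<omega>. ennreal (C \<omega>) \<partial>P\<nu> H x0)"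
    and V: "Vsec Wstar \<phi> \<pi> \<sigma> H c x0 = (\<integral>\<^sup>+ \<omega>. ennreal ((C \<omega>)\<^sup>2) \<partial>P\<mu> H x0)"
    and gap: "(\<integral>\<^sup>+ \<omega>. ennreal (\<Sum>l<H. min ((norm ((Wstar - W) (\<phi> (\<omega> l) (\<pi> (\<omega> l) l))))\<^sup>2 / \<sigma>\<^sup>2) 1)
           \<partial>traj Wstar \<phi> \<pi> \<sigma> H 0 x0)
         = (\<integral>\<^sup>+ \<omega>. ennreal (\<Sum>l<H. capped_gap l \<omega>) \<partial>P\<mu> H x0)"
    by (simp_all add: Jh_def Vsec_def traj_def stepK C_def capped_gap_def atLeast0LessThan)
  show ?thesis
    unfolding J\<mu> J\<nu> V gap
    by (rule cost_difference_le[OF C_measurable C_nonneg])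
      (use assms(8) assms(9)[of 0 x0] J\<nu> V in simp_all)
qed

end
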